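(* In the non-symmetric 2-colored operad $\mathbb V^{(d)}$ described below, the rewriting system $$m_{ss}(m_{ss}(x_1,x_2),x_3)\to m_{ss}(x_1,m_{ss}(x_2,x_3)),\quad m_{ts}(m_{ts}(x_1,x_2),x_3)\to m_{ts}(x_1,m_{ss}(x_2,x_3)),$$ $$m_{ts}(m_{st}(x_1,x_2),x_3)\to m_{st}(x_1,m_{ts}(x_2,x_3)),\quad m_{st}(m_{ss}(x_1,x_2),x_3)\to m_{st}(x_1,m_{st}(x_2,x_3)),$$ $$u(m_{ts}(x_1,x_2))\to m_{ss}(u(x_1),x_2),\quad u(m_{st}(x_1,x_2))\to m_{ss}(x_1,u(x_2))$$ is convergent (terminating and confluent).
   Context: Colors: straight $s$ and dotted $t$. $\mathbb V^{(d)}$ is the non-symmetric 2-colored operad generated by three binary operations of degree $0$: $m_{ss}$ (inputs $s,s$; output $s$), $m_{ts}$ (inputs $t,s$; output $t$), $m_{st}$ (inputs $s,t$; output $t$), and a unary operation $u$ of degree $d$ (input $t$; output $s$), subject to the six relations obtained by replacing each arrow above by an equality. A rewriting system for a non-symmetric operad consists of rules $\tau\to f$ ($\tau$ a planar tree monomial), reducing monomials by replacing a divisor $\tau$ with $f$; it is terminating if there is no infinite chain of reductions and confluent if every ambiguity (two leading monomials overlapping in a common vertex) yields an S-polynomial that reduces to zero. *)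

theory Defs
  imports Main
begin

datatype colour = S | T

text \<open>Planar tree monomials of the free non-symmetric 2-coloured operad generated by
  m_ss, m_ts, m_st (binary) and u (unary, of degree d).  Leaves are the inputs,
  labelled by their colour; in the non-symmetric setting the leaves are numbered
  left to right, so the label is implicit in the planar position.
  (The degree d of u only affects signs/grading and plays no role in rewriting.)\<close>
datatype tm = Leaf colour | Mss tm tm | Mts tm tm | Mst tm tm | U tm

fun outcol :: "tm \<Rightarrow> colour option" where
  "outcol (Leaf c) = Some c"
| "outcol (Mss a b) = (if outcol a = Some S \<and> outcol b = Some S then Some S else None)"
| "outcol (Mts a b) = (if outcol a = Some T \<and> outcol b = Some S then Some T else None)"
| "outcol (Mst a b) = (if outcol a = Some S \<and> outcol b = Some T then Some T else None)"
| "outcol (U a) = (if outcol a = Some T then Some S else None)"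

definition wellcol :: "tm \<Rightarrow> bool" where
  "wellcol x \<longleftrightarrow> outcol x \<noteq> None"

inductive rule :: "tm \<Rightarrow> tm \<Rightarrow> bool" where
  r1: "rule (Mss (Mss x1 x2) x3) (Mss x1 (Mss x2 x3))"
| r2: "rule (Mts (Mts x1 x2) x3) (Mts x1 (Mss x2 x3))"
| r3: "rule (Mts (Mst x1 x2) x3) (Mst x1 (Mts x2 x3))"
| r4: "rule (Mst (Mss x1 x2) x3) (Mst x1 (Mst x2 x3))"
| r5: "rule (U (Mts x1 x2)) (Mss (U x1) x2)"
| r6: "rule (U (Mst x1 x2)) (Mss x1 (U x2))"

inductive rstep :: "tm \<Rightarrow> tm \<Rightarrow> bool" where
  base: "rule a b \<Longrightarrow> rstep a b"
| mss1: "rstep a a' \<Longrightarrow> rstep (Mss a b) (Mss a' b)"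
| mss2: "rstep b b' \<Longrightarrow> rstep (Mss a b) (Mss a b')"
| mts1: "rstep a a' \<Longrightarrow> rstep (Mts a b) (Mts a' b)"
| mts2: "rstep b b' \<Longrightarrow> rstep (Mts a b) (Mts a b')"
| mst1: "rstep a a' \<Longrightarrow> rstep (Mst a b) (Mst a' b)"
| mst2: "rstep b b' \<Longrightarrow> rstep (Mst a b) (Mst a b')"
| u1: "rstep a a' \<Longrightarrow> rstep (U a) (U a')"

definition Red :: "(tm \<times> tm) set" where
  "Red = {(x, y). wellcol x \<and> rstep x y}"

definition terminating :: "(tm \<times> tm) set \<Rightarrow> bool" where
  "terminating R \<longleftrightarrow> wf (R\<inverse>)"

definition confluent :: "(tm \<times> tm) set \<Rightarrow> bool" where
  "confluent R \<longleftrightarrow> (\<forall>a b c. (a, b) \<in> R\<^sup>* \<and> (a, c) \<in> R\<^sup>* \<longrightarrow>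
      (\<exists>d. (b, d) \<in> R\<^sup>* \<and> (c, d) \<in> R\<^sup>*))"

end

(*
  Termination: give leaves weight 0, a binary vertex weight 2 w(left) + w(right) + 1 and
  u(x) weight 3 w(x).  Every rule lowers the weight at its root, and the weight is strictly
  monotone in each argument, so every reduction step lowers it.

  Confluence: by Newman's lemma it suffices to join one-step forks.  The rules are
  left-linear, so a step inside a variable of a redex commutes with the rule step; the
  remaining forks are the eight overlaps of two left-hand sides, whose S-polynomials reduce
  to zero in at most two steps on each side.  Reduction preserves the output colour, so
  restricting to well-coloured monomials keeps confluence.
*)

theory Submission
  imports Defs "HOL-Library.Confluence"
begin

lemma newman:
  assumes terminating: "wfp r\<inverse>\<inverse>"
    and local_confluence: "\<And>a b c. r a b \<Longrightarrow> r a c \<Longrightarrow> \<exists>d. r\<^sup>*\<^sup>* b d \<and> r\<^sup>*\<^sup>* c d"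
  shows "confluentp r"
proof (rule confluentpI)
  show "\<exists>d. r\<^sup>*\<^sup>* b d \<and> r\<^sup>*\<^sup>* c d" if "r\<^sup>*\<^sup>* a b" "r\<^sup>*\<^sup>* a c" for a b c
    using terminating that
  proof (induction arbitrary: b c rule: wfp_induct_rule)
    case (less a)
    show ?case
    proof (cases "a = b \<or> a = c")
      case True
      then show ?thesis using less.prems by blast
    next
      case False
      then obtain b1 c1 where "r a b1" "r\<^sup>*\<^sup>* b1 b" "r a c1" "r\<^sup>*\<^sup>* c1 c"
        using less.prems by (metis converse_rtranclpE)
      moreover obtain d where "r\<^sup>*\<^sup>* b1 d" "r\<^sup>*\<^sup>* c1 d"
        using local_confluence \<open>r a b1\<close> \<open>r a c1\<close> by blast
      ultimately obtain e where "r\<^sup>*\<^sup>* b e" "r\<^sup>*\<^sup>* d e"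
        using less.IH[of b1] by blast
      moreover obtain f where "r\<^sup>*\<^sup>* c f" "r\<^sup>*\<^sup>* e f"
        using less.IH[of c1] \<open>r a c1\<close> \<open>r\<^sup>*\<^sup>* c1 c\<close> \<open>r\<^sup>*\<^sup>* c1 d\<close> \<open>r\<^sup>*\<^sup>* d e\<close>
        by (meson conversepI rtranclp_trans)
      ultimately show ?thesis by (meson rtranclp_trans)
    qed
  qed
qed

lemma rtranclp_map:
  assumes "\<And>x y. r x y \<Longrightarrow> s (f x) (f y)" and "r\<^sup>*\<^sup>* x y"
  shows "s\<^sup>*\<^sup>* (f x) (f y)"
  using assms(2) by induction (auto intro: assms(1) rtranclp.rtrancl_into_rtrancl)

lemma confluent_restrict_to_invariant:
  assumes "confluentp r" and preserved: "\<And>x y. r x y \<Longrightarrow> P x \<Longrightarrow> P y"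
  shows "confluent {(x, y). P x \<and> r x y}" (is "confluent ?R")
proof -
  have steps: "a = b \<or> P a \<and> r\<^sup>*\<^sup>* a b" if "(a, b) \<in> ?R\<^sup>*" for a b
    using that by induction (auto intro: rtranclp.rtrancl_into_rtrancl)
  have restricted: "P b \<and> (a, b) \<in> ?R\<^sup>*" if "r\<^sup>*\<^sup>* a b" "P a" for a b
    using that
  proof induction
    case (step y z)
    then have "(y, z) \<in> ?R" by simp
    with step show ?case by (meson preserved rtrancl.rtrancl_into_rtrancl)
  qed simp
  show ?thesis
    unfolding confluent_def
  proof (intro allI impI, elim conjE)
    fix a b c
    assume "(a, b) \<in> ?R\<^sup>*" "(a, c) \<in> ?R\<^sup>*"
    then consider "b = a" "c = a" | "P a" "r\<^sup>*\<^sup>* a b" "r\<^sup>*\<^sup>* a c"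
      using steps by blast
    then show "\<exists>d. (b, d) \<in> ?R\<^sup>* \<and> (c, d) \<in> ?R\<^sup>*"
    proof cases
      case 2
      then obtain d where "r\<^sup>*\<^sup>* b d" "r\<^sup>*\<^sup>* c d"
        using confluentpD[OF assms(1)] by blast
      moreover from 2 have "P b" "P c"
        using restricted by blast+
      ultimately show ?thesis
        using restricted by blast
    qed auto
  qed
qed

fun weight :: "tm \<Rightarrow> nat" where
  "weight (Leaf c) = 0"
| "weight (Mss a b) = 2 * weight a + weight b + 1"
| "weight (Mts a b) = 2 * weight a + weight b + 1"
| "weight (Mst a b) = 2 * weight a + weight b + 1"
| "weight (U a) = 3 * weight a"

lemma rstep_weight_less: "rstep a b \<Longrightarrow> weight b < weight a"
  by (induction rule: rstep.induct) (auto elim: rule.cases)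

lemma rstep_outcol: "rstep a b \<Longrightarrow> outcol b = outcol a"
proof (induction rule: rstep.induct)
  case (base a b)
  then show ?case by (induction rule: rule.induct) auto
qed auto

lemmas rsteps_Mss1 = rtranclp_map[of rstep rstep "\<lambda>x. Mss x b" for b, OF rstep.mss1]
lemmas rsteps_Mss2 = rtranclp_map[of rstep rstep "Mss a" for a, OF rstep.mss2]
lemmas rsteps_Mts1 = rtranclp_map[of rstep rstep "\<lambda>x. Mts x b" for b, OF rstep.mts1]
lemmas rsteps_Mts2 = rtranclp_map[of rstep rstep "Mts a" for a, OF rstep.mts2]
lemmas rsteps_Mst1 = rtranclp_map[of rstep rstep "\<lambda>x. Mst x b" for b, OF rstep.mst1]
lemmas rsteps_Mst2 = rtranclp_map[of rstep rstep "Mst a" for a, OF rstep.mst2]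
lemmas rsteps_U = rtranclp_map[of rstep rstep U, OF rstep.u1]

text \<open>Each line is a critical pair: the two one-step reducts of a monomial in which two
  left-hand sides overlap in a common vertex.\<close>
lemma critical_pairs_joinable:
  "\<exists>d. rstep\<^sup>*\<^sup>* (Mss (Mss x1 x2) (Mss x3 x4)) d \<and> rstep\<^sup>*\<^sup>* (Mss (Mss x1 (Mss x2 x3)) x4) d"
  "\<exists>d. rstep\<^sup>*\<^sup>* (Mts (Mts x1 x2) (Mss x3 x4)) d \<and> rstep\<^sup>*\<^sup>* (Mts (Mts x1 (Mss x2 x3)) x4) d"
  "\<exists>d. rstep\<^sup>*\<^sup>* (Mts (Mst x1 x2) (Mss x3 x4)) d \<and> rstep\<^sup>*\<^sup>* (Mts (Mst x1 (Mts x2 x3)) x4) d"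
  "\<exists>d. rstep\<^sup>*\<^sup>* (Mst (Mss x1 x2) (Mts x3 x4)) d \<and> rstep\<^sup>*\<^sup>* (Mts (Mst x1 (Mst x2 x3)) x4) d"
  "\<exists>d. rstep\<^sup>*\<^sup>* (Mst (Mss x1 x2) (Mst x3 x4)) d \<and> rstep\<^sup>*\<^sup>* (Mst (Mss x1 (Mss x2 x3)) x4) d"
  "\<exists>d. rstep\<^sup>*\<^sup>* (Mss (U (Mts x1 x2)) x3) d \<and> rstep\<^sup>*\<^sup>* (U (Mts x1 (Mss x2 x3))) d"
  "\<exists>d. rstep\<^sup>*\<^sup>* (Mss (U (Mst x1 x2)) x3) d \<and> rstep\<^sup>*\<^sup>* (U (Mst x1 (Mts x2 x3))) d"
  "\<exists>d. rstep\<^sup>*\<^sup>* (Mss (Mss x1 x2) (U x3)) d \<and> rstep\<^sup>*\<^sup>* (U (Mst x1 (Mst x2 x3))) d"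
  by (meson rstep.intros rule.intros r_into_rtranclp converse_rtranclp_into_rtranclp)+

inductive_cases rstep_MssE: "rstep (Mss a b) c"
inductive_cases rstep_MtsE: "rstep (Mts a b) c"
inductive_cases rstep_MstE: "rstep (Mst a b) c"
inductive_cases rstep_UE: "rstep (U a) c"
inductive_cases rule_MssE: "rule (Mss a b) c"
inductive_cases rule_MtsE: "rule (Mts a b) c"
inductive_cases rule_MstE: "rule (Mst a b) c"
inductive_cases rule_UE: "rule (U a) c"

lemma rule_rstep_joinable: "rule a b \<Longrightarrow> rstep a c \<Longrightarrow> \<exists>d. rstep\<^sup>*\<^sup>* b d \<and> rstep\<^sup>*\<^sup>* c d"
  by (induction rule: rule.induct;
      auto elim!: rstep_MssE rstep_MtsE rstep_MstE rstep_UE rule_MssE rule_MtsE rule_MstE rule_UE;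
      meson critical_pairs_joinable rstep.intros rule.intros r_into_rtranclp)

lemma rstep_locally_confluent: "rstep a b \<Longrightarrow> rstep a c \<Longrightarrow> \<exists>d. rstep\<^sup>*\<^sup>* b d \<and> rstep\<^sup>*\<^sup>* c d"
proof (induction arbitrary: c rule: rstep.induct)
  case (base a b)
  then show ?case using rule_rstep_joinable by blast
next
  case (mss1 a a' b)
  from mss1.prems show ?case
    by cases (meson mss1 rule_rstep_joinable rstep.mss1 rstep.mss2 rsteps_Mss1 r_into_rtranclp)+
next
  case (mss2 b b' a)
  from mss2.prems show ?case
    by cases (meson mss2 rule_rstep_joinable rstep.mss1 rstep.mss2 rsteps_Mss2 r_into_rtranclp)+
next
  case (mts1 a a' b)
  from mts1.prems show ?case
    by cases (meson mts1 rule_rstep_joinable rstep.mts1 rstep.mts2 rsteps_Mts1 r_into_rtranclp)+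
next
  case (mts2 b b' a)
  from mts2.prems show ?case
    by cases (meson mts2 rule_rstep_joinable rstep.mts1 rstep.mts2 rsteps_Mts2 r_into_rtranclp)+
next
  case (mst1 a a' b)
  from mst1.prems show ?case
    by cases (meson mst1 rule_rstep_joinable rstep.mst1 rstep.mst2 rsteps_Mst1 r_into_rtranclp)+
next
  case (mst2 b b' a)
  from mst2.prems show ?case
    by cases (meson mst2 rule_rstep_joinable rstep.mst1 rstep.mst2 rsteps_Mst2 r_into_rtranclp)+
next
  case (u1 a a')
  from u1.prems show ?case
    by cases (meson u1 rule_rstep_joinable rstep.u1 rsteps_U r_into_rtranclp)+
qed

theorem theorem4p11:
  shows "terminating Red \<and> confluent Red"
proof
  have "Red\<inverse> \<subseteq> measure weight"
    by (auto simp: Red_def dest: rstep_weight_less)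
  then show "terminating Red"
    unfolding terminating_def using wf_subset by blast
  have "wfp rstep\<inverse>\<inverse>"
    by (rule wfp_if_convertible_to_nat[where f = weight]) (simp add: rstep_weight_less)
  then have "confluentp rstep"
    using rstep_locally_confluent by (rule newman)
  then show "confluent Red"
    unfolding Red_def wellcol_def
    by (rule confluent_restrict_to_invariant) (simp add: rstep_outcol)
qed

end
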